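(* Let $\alpha>-1$, $d\in\widetilde{D}$, $p=(L_n^{(\alpha)})_{n\in\mathbb{N}_0}$, $q=(L_n^{(\alpha+1)})_{n\in\mathbb{N}_0}$, and let $T=E_{p,d}$ be regarded as an operator in $H(q)$ with domain $\mathcal{P}_c$. For $g=\sum_kg_kq_k\in H(q)$: (i) $g\in D(T^* )$ iff $\sum_{k=0}^\infty\left|g_k\bar d_k+\sum_{t=0}^{k-1}(\bar d_t-\bar d_{t+1})g_t\right|^2<\infty$; (ii) for $g\in D(T^* )$, $T^*g=\sum_{k=0}^\infty\left[g_k\bar d_k+\sum_{t=0}^{k-1}(\bar d_t-\bar d_{t+1})g_t\right]q_k$; (iii) for fixed $j\in\mathbb{N}_0$, $q_j\in D(T^* )$ iff $\bar d_j-\bar d_{j+1}=0$; (iv) $E_{L^{(\alpha)},d}$ is unbounded as an operator in $H(q)$, for every $d\in\widetilde{D}$.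
   Context: $\mathcal{P}_c$ is the space of polynomials in one real variable with complex coefficients. For $\beta>-1$, $L_n^{(\beta)}(x)=\sum_{k=0}^n\frac{(-1)^k}{k!}\binom{n+\beta}{n-k}x^k$ is the generalized Laguerre polynomial. For a sequence $Q=(Q_n)$ of polynomials with $\deg Q_n=n$, $H(Q)$ is the completion of $\mathcal{P}_c$ with respect to the inner product making $(Q_n)$ orthonormal (so here the unnormalized $L_n^{(\alpha+1)}$ are orthonormal); $g\in H(Q)$ is written $g=\sum_kg_kQ_k$, $(g_k)\in\ell_2$. $\widetilde{D}$ is the set of non-constant sequences of non-zero complex numbers. For a polynomial sequence $p$ and $d\in\widetilde{D}$, $E_{p,d}$ is the linear map on $\mathcal{P}_c$ with $E_{p,d}(p_n)=d_np_n$. $T^*$ is the Hilbert space adjoint. *)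

theory Defs
  imports "HOL-Analysis.Analysis" "HOL-Computational_Algebra.Polynomial"
begin

definition laguerre :: "real \<Rightarrow> nat \<Rightarrow> complex poly" where
  "laguerre \<beta> n = (\<Sum>k\<le>n. monom (complex_of_real ((-1)^k / fact k * ((real n + \<beta>) gchoose (n - k)))) k)"

definition Dtilde :: "(nat \<Rightarrow> complex) set" where
  "Dtilde = {d. (\<forall>n. d n \<noteq> 0) \<and> \<not> (\<exists>c. \<forall>n. d n = c)}"

text \<open>Coordinates of a polynomial P with respect to a polynomial basis q (deg q_n = n):
  the unique finitely supported c with P = sum_k c_k q_k.\<close>
definition basis_coeffs :: "(nat \<Rightarrow> complex poly) \<Rightarrow> complex poly \<Rightarrow> nat \<Rightarrow> complex" where
  "basis_coeffs q P = (THE c. finite {k. c k \<noteq> 0} \<and> P = (\<Sum>k\<in>{k. c k \<noteq> 0}. smult (c k) (q k)))"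

definition Eop :: "(nat \<Rightarrow> complex poly) \<Rightarrow> (nat \<Rightarrow> complex) \<Rightarrow> complex poly \<Rightarrow> complex poly" where
  "Eop p d P = (\<Sum>k\<in>{k. basis_coeffs p P k \<noteq> 0}. smult (d k * basis_coeffs p P k) (p k))"

text \<open>H(q) is identified with the coefficient space l2: g = sum_k g_k q_k with (g_k) in l2.\<close>
definition l2seq :: "(nat \<Rightarrow> complex) \<Rightarrow> bool" where
  "l2seq g \<longleftrightarrow> summable (\<lambda>k. (cmod (g k))^2)"

definition hinner :: "(nat \<Rightarrow> complex) \<Rightarrow> (nat \<Rightarrow> complex) \<Rightarrow> complex" where
  "hinner g h = (\<Sum>k. g k * cnj (h k))"

definition hnorm :: "(nat \<Rightarrow> complex) \<Rightarrow> real" where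
  "hnorm g = sqrt (\<Sum>k. (cmod (g k))^2)"

definition adj_dom :: "(nat \<Rightarrow> complex poly) \<Rightarrow> (complex poly \<Rightarrow> complex poly) \<Rightarrow> (nat \<Rightarrow> complex) \<Rightarrow> bool" where
  "adj_dom q T g \<longleftrightarrow> l2seq g \<and>
     (\<exists>h. l2seq h \<and> (\<forall>P. hinner (basis_coeffs q (T P)) g = hinner (basis_coeffs q P) h))"

definition adj :: "(nat \<Rightarrow> complex poly) \<Rightarrow> (complex poly \<Rightarrow> complex poly) \<Rightarrow> (nat \<Rightarrow> complex) \<Rightarrow> nat \<Rightarrow> complex" where
  "adj q T g = (THE h. l2seq h \<and> (\<forall>P. hinner (basis_coeffs q (T P)) g = hinner (basis_coeffs q P) h))"

end

theory Submission
  imports Defs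
begin

text \<open>
  Since L_0^(a) = L_0^(a+1) and L_{n+1}^(a) = L_{n+1}^(a+1) - L_n^(a+1), the
  q-coordinates of E_{p,d}(sum_k b_k p_k) are the differences d_k b_k - d_{k+1} b_{k+1}.
  Summation by parts then turns the inner product against g into an inner product of
  the q-coordinates of the argument against the sequence
  h_k = g_k conj(d_k) + sum_{t<k} (conj d_t - conj d_{t+1}) g_t,
  i.e. the adjoint acts by g \<mapsto> h on the whole of l2, and g lies in its domain exactly
  when h is square summable. For g = q_j this h is eventually the constant
  conj d_j - conj d_{j+1}; choosing j with d_j \<noteq> d_{j+1} and testing against
  q_{j+1} + ... + q_{j+N} gives |<T P, q_j>| = N |d_j - d_{j+1}| while |P| = sqrt N,
  so T is unbounded.
\<close>

lemma coeff_laguerre: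
  "coeff (laguerre b n) i =
     (if i \<le> n then complex_of_real ((-1)^i / fact i * ((real n + b) gchoose (n - i))) else 0)"
  unfolding laguerre_def by (simp add: coeff_sum coeff_monom)

lemma laguerre_0: "laguerre b 0 = 1"
  by (simp add: poly_eq_iff coeff_laguerre coeff_1)

lemma laguerre_Suc_eq_diff:
  "laguerre a (Suc n) = laguerre (a + 1) (Suc n) - laguerre (a + 1) n"
proof (rule poly_eqI)
  fix i
  show "coeff (laguerre a (Suc n)) i = coeff (laguerre (a + 1) (Suc n) - laguerre (a + 1) n) i"
  proof (cases "i \<le> n")
    case True
    then have "Suc n - i = Suc (n - i)" by simp
    moreover have "(real (Suc n) + (a + 1)) gchoose Suc (n - i) =
        ((real (Suc n) + a) gchoose (n - i)) + ((real (Suc n) + a) gchoose Suc (n - i))"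
      using gbinomial_Suc_Suc[of "real (Suc n) + a" "n - i"] by (simp add: algebra_simps)
    moreover have "real n + (a + 1) = real (Suc n) + a" by simp
    ultimately show ?thesis using True
      by (simp add: coeff_laguerre algebra_simps flip: of_real_diff)
  next
    case False
    then show ?thesis by (cases "i = Suc n") (auto simp: coeff_laguerre)
  qed
qed

definition triangular_basis :: "(nat \<Rightarrow> 'a::zero poly) \<Rightarrow> bool" where
  "triangular_basis q \<longleftrightarrow> (\<forall>n. degree (q n) \<le> n \<and> coeff (q n) n \<noteq> 0)"

lemma triangular_basis_laguerre: "triangular_basis (laguerre b)"
  unfolding triangular_basis_def by (auto intro: degree_le simp: coeff_laguerre)

definition basis_sum :: "(nat \<Rightarrow> 'a::comm_ring poly) \<Rightarrow> (nat \<Rightarrow> 'a) \<Rightarrow> nat \<Rightarrow> 'a poly" where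
  "basis_sum q c N = (\<Sum>k\<le>N. smult (c k) (q k))"

lemma basis_sum_0: "basis_sum q c 0 = smult (c 0) (q 0)"
  by (simp add: basis_sum_def)

lemma basis_sum_Suc:
  "basis_sum q c (Suc N) = basis_sum q c N + smult (c (Suc N)) (q (Suc N))"
  by (simp add: basis_sum_def)

lemma basis_sum_diff: "basis_sum q (\<lambda>k. c k - c' k) N = basis_sum q c N - basis_sum q c' N"
  by (simp add: basis_sum_def smult_diff_left sum_subtractf)

lemma coeff_basis_sum_top:
  assumes "triangular_basis q"
  shows "coeff (basis_sum q c N) N = c N * coeff (q N) N"
proof (cases N)
  case (Suc M)
  have "coeff (q j) (Suc M) = 0" if "j \<le> M" for j
    using assms that unfolding triangular_basis_def by (metis coeff_eq_0 le_imp_less_Suc order.strict_trans1)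
  then show ?thesis using Suc by (simp add: basis_sum_def coeff_sum)
qed (simp add: basis_sum_0)

lemma basis_sum_eq_0_imp:
  fixes q :: "nat \<Rightarrow> 'a::idom poly"
  assumes "triangular_basis q" "\<forall>k>N. c k = 0" "basis_sum q c N = 0"
  shows "c k = 0"
  using assms(2,3)
proof (induction N arbitrary: k)
  case 0
  then have "q 0 \<noteq> 0 \<Longrightarrow> c 0 = 0" by (simp add: basis_sum_0)
  moreover have "q 0 \<noteq> 0" using assms(1) unfolding triangular_basis_def by (metis coeff_0)
  ultimately show ?case using 0 by (cases k) auto
next
  case (Suc N)
  have "c (Suc N) = 0"
    using coeff_basis_sum_top[OF assms(1), of c "Suc N"] Suc.prems assms(1)
    unfolding triangular_basis_def by simp
  with Suc.prems have "\<forall>k>N. c k = 0" by (metis Suc_lessI)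
  moreover from \<open>c (Suc N) = 0\<close> Suc.prems have "basis_sum q c N = 0" by (simp add: basis_sum_Suc)
  ultimately show ?case by (rule Suc.IH)
qed

lemma basis_sum_exists:
  fixes q :: "nat \<Rightarrow> 'a::field poly"
  assumes "triangular_basis q" "degree P \<le> N"
  shows "\<exists>c. (\<forall>k>N. c k = 0) \<and> P = basis_sum q c N"
  using assms(2)
proof (induction N arbitrary: P)
  case 0
  have q0: "coeff (q 0) 0 \<noteq> 0" "degree (q 0) = 0" using assms(1) unfolding triangular_basis_def by auto
  have "P = smult (coeff P 0 / coeff (q 0) 0) (q 0)"
  proof (rule poly_eqI)
    fix i show "coeff P i = coeff (smult (coeff P 0 / coeff (q 0) 0) (q 0)) i"
      using q0 0 by (cases i) (auto simp: coeff_eq_0)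
  qed
  then show ?case
    by (intro exI[of _ "\<lambda>k. if k = 0 then coeff P 0 / coeff (q 0) 0 else 0"]) (simp add: basis_sum_0)
next
  case (Suc N)
  define a where "a = coeff P (Suc N) / coeff (q (Suc N)) (Suc N)"
  have qN: "coeff (q (Suc N)) (Suc N) \<noteq> 0" "degree (q (Suc N)) \<le> Suc N"
    using assms(1) unfolding triangular_basis_def by auto
  have "degree (P - smult a (q (Suc N))) \<le> N"
  proof (rule degree_le, intro allI impI)
    fix i assume "N < i"
    then consider "i = Suc N" | "i > Suc N" by linarith
    then show "coeff (P - smult a (q (Suc N))) i = 0"
      by cases (use qN Suc.prems in \<open>simp_all add: a_def coeff_eq_0\<close>)
  qed
  then obtain c where c: "\<forall>k>N. c k = 0" "P - smult a (q (Suc N)) = basis_sum q c N"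
    using Suc.IH by blast
  have "basis_sum q (c(Suc N := a)) N = basis_sum q c N"
    unfolding basis_sum_def by (intro sum.cong) auto
  then have "P = basis_sum q (c(Suc N := a)) (Suc N)"
    by (simp add: basis_sum_Suc flip: c(2))
  moreover have "\<forall>k>Suc N. (c(Suc N := a)) k = 0" using c(1) by simp
  ultimately show ?case by blast
qed

lemma basis_sum_eq_sum_support:
  assumes "\<forall>k>N. c k = 0"
  shows "basis_sum q c N = (\<Sum>k\<in>{k. c k \<noteq> 0}. smult (c k) (q k))"
  unfolding basis_sum_def
proof (rule sum.mono_neutral_right)
  show "{k. c k \<noteq> 0} \<subseteq> {..N}" using assms not_le by auto
qed auto

lemma basis_coeffs_eqI:
  assumes B: "triangular_basis q" and c: "\<forall>k>N. c k = 0" and P: "P = basis_sum q c N"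
  shows "basis_coeffs q P = c"
  unfolding basis_coeffs_def
proof (rule the_equality)
  have "{k. c k \<noteq> 0} \<subseteq> {..N}" using c not_le by auto
  then show "finite {k. c k \<noteq> 0} \<and> P = (\<Sum>k\<in>{k. c k \<noteq> 0}. smult (c k) (q k))"
    using P basis_sum_eq_sum_support[OF c] finite_subset by auto
next
  fix c' assume c': "finite {k. c' k \<noteq> 0} \<and> P = (\<Sum>k\<in>{k. c' k \<noteq> 0}. smult (c' k) (q k))"
  then obtain M where "\<forall>k\<in>{k. c' k \<noteq> 0}. k \<le> M"
    using finite_nat_set_iff_bounded_le by blast
  then have c'M: "\<forall>k>max N M. c' k = 0" and cM: "\<forall>k>max N M. c k = 0" using c by auto
  have "basis_sum q c' (max N M) = P" "basis_sum q c (max N M) = P"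
    using c' P by (simp_all add: basis_sum_eq_sum_support[OF c'M] basis_sum_eq_sum_support[OF cM]
        basis_sum_eq_sum_support[OF c])
  then have "basis_sum q (\<lambda>k. c' k - c k) (max N M) = 0" by (simp add: basis_sum_diff)
  with c'M cM show "c' = c"
    using basis_sum_eq_0_imp[OF B, of "max N M" "\<lambda>k. c' k - c k"] by fastforce
qed

lemma basis_coeffs_expansion:
  assumes "triangular_basis q"
  shows "\<exists>N. (\<forall>k>N. basis_coeffs q P k = 0) \<and> P = basis_sum q (basis_coeffs q P) N"
  using basis_sum_exists[OF assms order.refl] basis_coeffs_eqI[OF assms] by metis

lemma l2seq_basis_coeffs:
  assumes "triangular_basis q"
  shows "l2seq (basis_coeffs q P)"
proof -
  obtain N where "\<forall>k>N. basis_coeffs q P k = 0" using basis_coeffs_expansion[OF assms] by blast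
  then show ?thesis unfolding l2seq_def by (intro summable_finite[of "{..N}"]) (auto simp: not_le)
qed

lemma basis_coeffs_basis:
  assumes "triangular_basis q"
  shows "basis_coeffs q (q n) = (\<lambda>k. if k = n then 1 else 0)"
proof (rule basis_coeffs_eqI[OF assms, of n])
  have "basis_sum q (\<lambda>k. if k = n then 1 else 0) n = (\<Sum>k\<le>n. if k = n then q k else 0)"
    unfolding basis_sum_def by (rule sum.cong) auto
  then show "q n = basis_sum q (\<lambda>k. if k = n then 1 else 0) n" by simp
qed simp

lemma Eop_eq_basis_sum:
  assumes "\<forall>k>N. basis_coeffs p P k = 0"
  shows "Eop p d P = basis_sum p (\<lambda>k. d k * basis_coeffs p P k) N"
  unfolding Eop_def basis_sum_def
proof (rule sum.mono_neutral_left)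
  show "{k. basis_coeffs p P k \<noteq> 0} \<subseteq> {..N}" using assms not_le by auto
qed auto

lemma basis_sum_difference_basis:
  assumes "p 0 = q 0" and "\<And>n. p (Suc n) = q (Suc n) - q n"
  shows "basis_sum p b N = basis_sum q (\<lambda>n. b n - b (Suc n)) N + smult (b (Suc N)) (q N)"
  by (induction N)
    (simp_all add: assms basis_sum_0 basis_sum_Suc smult_diff_left smult_diff_right algebra_simps)

lemma hinner_finite_support:
  assumes "\<forall>k>N. c k = 0"
  shows "hinner c h = (\<Sum>k\<le>N. c k * cnj (h k))"
  unfolding hinner_def by (rule suminf_finite) (simp_all add: assms not_le)

lemma hinner_delta: "hinner (\<lambda>k. if k = n then 1 else 0) h = cnj (h n)"
  unfolding hinner_def by (subst suminf_finite[of "{n}"]) auto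

lemma hinner_delta_right: "hinner g (\<lambda>k. if k = n then 1 else 0) = g n"
  unfolding hinner_def by (subst suminf_finite[of "{n}"]) auto

lemma l2seq_delta: "l2seq (\<lambda>k. if k = n then 1 else 0)"
  unfolding l2seq_def by (rule summable_finite[of "{n}"]) auto

lemma cmod_le_hnorm:
  assumes "l2seq g"
  shows "cmod (g j) \<le> hnorm g"
proof -
  have "(\<Sum>k\<in>{j}. (cmod (g k))^2) \<le> (\<Sum>k. (cmod (g k))^2)"
    using assms unfolding l2seq_def by (intro sum_le_suminf) auto
  then show ?thesis unfolding hnorm_def by (simp add: real_le_rsqrt)
qed

definition adj_coeffs :: "(nat \<Rightarrow> complex) \<Rightarrow> (nat \<Rightarrow> complex) \<Rightarrow> nat \<Rightarrow> complex" where
  "adj_coeffs d g k = g k * cnj (d k) + (\<Sum>t<k. (cnj (d t) - cnj (d (Suc t))) * g t)"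

lemma summation_by_parts_adj_coeffs:
  fixes b G d :: "nat \<Rightarrow> complex"
  shows "(\<Sum>k\<le>N. (b k - b (Suc k)) * (G k * d k + (\<Sum>t<k. (d t - d (Suc t)) * G t)))
           + b (Suc N) * (G N * d N + (\<Sum>t<N. (d t - d (Suc t)) * G t))
         = (\<Sum>k\<le>N. (d k * b k - d (Suc k) * b (Suc k)) * G k) + b (Suc N) * d (Suc N) * G N"
  by (induction N) (simp_all add: algebra_simps)

lemma hinner_Eop_difference_basis:
  assumes Bp: "triangular_basis p" and Bq: "triangular_basis q"
    and p0: "p 0 = q 0" and pSuc: "\<And>n. p (Suc n) = q (Suc n) - q n"
  shows "hinner (basis_coeffs q (Eop p d P)) g = hinner (basis_coeffs q P) (adj_coeffs d g)"
proof -
  define b where "b = basis_coeffs p P"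
  obtain N where bN: "\<forall>k>N. b k = 0" and P: "P = basis_sum p b N"
    using basis_coeffs_expansion[OF Bp, of P] unfolding b_def by blast
  define e where "e = (\<lambda>n. d n * b n - d (Suc n) * b (Suc n))"
  define c where "c = (\<lambda>n. b n - b (Suc n))"
  have eN: "\<forall>k>N. e k = 0" and cN: "\<forall>k>N. c k = 0" using bN by (simp_all add: e_def c_def)
  have "Eop p d P = basis_sum q e N"
    using Eop_eq_basis_sum[of N p P d] basis_sum_difference_basis[OF p0 pSuc, of "\<lambda>k. d k * b k" N] bN
    by (simp add: b_def e_def)
  then have Ee: "basis_coeffs q (Eop p d P) = e" by (rule basis_coeffs_eqI[OF Bq eN])
  have "P = basis_sum q c N"
    using P basis_sum_difference_basis[OF p0 pSuc, of b N] bN by (simp add: c_def)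
  then have Pc: "basis_coeffs q P = c" by (rule basis_coeffs_eqI[OF Bq cN])
  have "hinner e g = (\<Sum>k\<le>N. e k * cnj (g k))" by (rule hinner_finite_support[OF eN])
  also have "\<dots> = (\<Sum>k\<le>N. c k * cnj (adj_coeffs d g k))"
    using summation_by_parts_adj_coeffs[of b "\<lambda>k. cnj (g k)" d N] bN
    by (simp add: e_def c_def adj_coeffs_def)
  also have "\<dots> = hinner c (adj_coeffs d g)" by (rule hinner_finite_support[OF cN, symmetric])
  finally show ?thesis using Ee Pc by simp
qed

lemma hinner_Eop_laguerre:
  "hinner (basis_coeffs (laguerre (a + 1)) (Eop (laguerre a) d P)) g
     = hinner (basis_coeffs (laguerre (a + 1)) P) (adj_coeffs d g)"
proof (rule hinner_Eop_difference_basis)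
  show "laguerre a 0 = laguerre (a + 1) 0" by (simp only: laguerre_0)
qed (rule triangular_basis_laguerre laguerre_Suc_eq_diff)+

lemma hinner_basis_coeffs_eq_imp_eq:
  assumes "triangular_basis q" "\<forall>P. hinner (basis_coeffs q P) h = hinner (basis_coeffs q P) h'"
  shows "h = h'"
proof
  fix n
  show "h n = h' n"
    using assms(2)[rule_format, of "q n"] by (simp add: basis_coeffs_basis[OF assms(1)] hinner_delta)
qed

lemma adj_dom_iff_formal_adjoint:
  assumes "triangular_basis q" "\<And>P g. hinner (basis_coeffs q (T P)) g = hinner (basis_coeffs q P) (A g)"
  shows "adj_dom q T g \<longleftrightarrow> l2seq g \<and> l2seq (A g)"
  unfolding adj_dom_def assms(2) using hinner_basis_coeffs_eq_imp_eq[OF assms(1)] by blast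

lemma adj_eq_formal_adjoint:
  assumes "triangular_basis q" "\<And>P g. hinner (basis_coeffs q (T P)) g = hinner (basis_coeffs q P) (A g)"
    and "adj_dom q T g"
  shows "adj q T g = A g"
  unfolding adj_def assms(2)
proof (rule the_equality)
  show "l2seq (A g) \<and> (\<forall>P. hinner (basis_coeffs q P) (A g) = hinner (basis_coeffs q P) (A g))"
    using adj_dom_iff_formal_adjoint[OF assms(1,2)] assms(3) by blast
qed (use hinner_basis_coeffs_eq_imp_eq[OF assms(1)] in blast)

lemma adj_coeffs_delta:
  "adj_coeffs d (\<lambda>k. if k = j then 1 else 0) k =
     (if k = j then cnj (d j) else 0) + (if j < k then cnj (d j) - cnj (d (Suc j)) else 0)"
proof -
  have "(\<Sum>t<k. (cnj (d t) - cnj (d (Suc t))) * (if t = j then 1 else 0))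
      = (\<Sum>t\<in>{..<k}. if t = j then cnj (d t) - cnj (d (Suc t)) else 0)"
    by (rule sum.cong) auto
  then show ?thesis by (simp add: adj_coeffs_def)
qed

lemma l2seq_adj_coeffs_delta_iff:
  "l2seq (adj_coeffs d (\<lambda>k. if k = j then 1 else 0)) \<longleftrightarrow> cnj (d j) - cnj (d (Suc j)) = 0"
proof
  let ?D = "cnj (d j) - cnj (d (Suc j))"
  assume "l2seq (adj_coeffs d (\<lambda>k. if k = j then 1 else 0))"
  then have "(\<lambda>k. (cmod (adj_coeffs d (\<lambda>k. if k = j then 1 else 0) k))^2) \<longlonglongrightarrow> 0"
    unfolding l2seq_def by (rule summable_LIMSEQ_zero)
  moreover have "\<forall>\<^sub>F k in sequentially. (cmod (adj_coeffs d (\<lambda>k. if k = j then 1 else 0) k))^2 = (cmod ?D)^2"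
    by (rule eventually_sequentiallyI[of "Suc j"]) (simp add: adj_coeffs_delta)
  ultimately have "(\<lambda>k. (cmod ?D)^2) \<longlonglongrightarrow> 0" by (simp only: tendsto_cong)
  then show "?D = 0" by (simp add: LIMSEQ_const_iff)
next
  assume "cnj (d j) - cnj (d (Suc j)) = 0"
  then show "l2seq (adj_coeffs d (\<lambda>k. if k = j then 1 else 0))"
    unfolding l2seq_def by (intro summable_finite[of "{j}"]) (auto simp: adj_coeffs_delta)
qed

lemma Dtilde_ex_neq_Suc:
  assumes "d \<in> Dtilde"
  shows "\<exists>j. d j \<noteq> d (Suc j)"
proof (rule ccontr)
  assume "\<nexists>j. d j \<noteq> d (Suc j)"
  then have "d n = d 0" for n by (induction n) auto
  with assms show False unfolding Dtilde_def by blast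
qed

lemma not_sqrt_le_const:
  fixes m C :: real
  assumes "m > 0"
  obtains N :: nat where "N \<ge> 1" "C * sqrt (real N) < real N * m"
proof -
  define N where "N = nat \<lceil>(C / m)^2\<rceil> + 1"
  have N: "N \<ge> 1" "real N > (C / m)^2" unfolding N_def by linarith+
  from N(2) have "C / m < sqrt (real N)" by (rule real_less_rsqrt)
  then have "C < m * sqrt (real N)" using assms by (simp add: field_simps)
  then have "C * sqrt (real N) < m * sqrt (real N) * sqrt (real N)"
    using N(1) by (intro mult_strict_right_mono) auto
  also have "\<dots> = real N * m" by simp
  finally show ?thesis using N(1) that by blast
qed

lemma Eop_laguerre_unbounded:
  assumes "d \<in> Dtilde"
  shows "\<not> (\<exists>C. \<forall>P. hnorm (basis_coeffs (laguerre (a + 1)) (Eop (laguerre a) d P))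
                 \<le> C * hnorm (basis_coeffs (laguerre (a + 1)) P))"
proof
  define q where "q = laguerre (a + 1)"
  have B: "triangular_basis q" by (simp add: q_def triangular_basis_laguerre)
  assume "\<exists>C. \<forall>P. hnorm (basis_coeffs q (Eop (laguerre a) d P)) \<le> C * hnorm (basis_coeffs q P)"
  then obtain C where C: "\<And>P. hnorm (basis_coeffs q (Eop (laguerre a) d P)) \<le> C * hnorm (basis_coeffs q P)"
    by (auto simp: q_def)
  obtain j where "d j \<noteq> d (Suc j)" using Dtilde_ex_neq_Suc[OF assms] by blast
  then obtain N :: nat where N: "N \<ge> 1" "C * sqrt (real N) < real N * cmod (d j - d (Suc j))"
    using not_sqrt_le_const[of "cmod (d j - d (Suc j))" C] by auto
  define c where "c k = (if j < k \<and> k \<le> j + N then 1 else 0 :: complex)" for k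
  define P where "P = basis_sum q c (j + N)"
  have Pc: "basis_coeffs q P = c" by (rule basis_coeffs_eqI[OF B, of "j + N"]) (auto simp: c_def P_def)
  have "(\<Sum>k. (cmod (c k))^2) = (\<Sum>k\<in>{Suc j..j + N}. (cmod (c k))^2)"
    by (rule suminf_finite) (auto simp: c_def)
  also have "\<dots> = real N" by (simp add: c_def)
  finally have norm_P: "hnorm (basis_coeffs q P) = sqrt (real N)" by (simp add: hnorm_def Pc)
  define E where "E = basis_coeffs q (Eop (laguerre a) d P)"
  have "E j = hinner c (adj_coeffs d (\<lambda>k. if k = j then 1 else 0))"
    using hinner_Eop_laguerre[of a d P "\<lambda>k. if k = j then 1 else 0", folded q_def]
      hinner_delta_right[of E j]
    by (simp add: E_def Pc)
  also have "\<dots> = (\<Sum>k\<in>{Suc j..j + N}. d j - d (Suc j))"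
    unfolding hinner_def by (subst suminf_finite[of "{Suc j..j + N}"]) (auto simp: c_def adj_coeffs_delta)
  finally have Ej: "cmod (E j) = real N * cmod (d j - d (Suc j))" by (simp add: norm_mult)
  have "cmod (E j) \<le> hnorm E" by (rule cmod_le_hnorm) (simp add: E_def l2seq_basis_coeffs[OF B])
  also have "\<dots> \<le> C * sqrt (real N)" using C[of P] norm_P by (simp add: E_def)
  finally show False using Ej N(2) by simp
qed

theorem theorem4:
  fixes \<alpha> :: real and d :: "nat \<Rightarrow> complex"
  assumes "\<alpha> > -1" and "d \<in> Dtilde"
  defines "p \<equiv> laguerre \<alpha>" and "q \<equiv> laguerre (\<alpha> + 1)" and "T \<equiv> Eop (laguerre \<alpha>) d"
  shows "(\<forall>g. l2seq g \<longrightarrow>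
            (adj_dom q T g \<longleftrightarrow>
             summable (\<lambda>k. (cmod (g k * cnj (d k) + (\<Sum>t<k. (cnj (d t) - cnj (d (Suc t))) * g t)))^2)))
       \<and> (\<forall>g. adj_dom q T g \<longrightarrow>
            adj q T g = (\<lambda>k. g k * cnj (d k) + (\<Sum>t<k. (cnj (d t) - cnj (d (Suc t))) * g t)))
       \<and> (\<forall>j. adj_dom q T (basis_coeffs q (q j)) \<longleftrightarrow> cnj (d j) - cnj (d (Suc j)) = 0)
       \<and> (\<forall>d'\<in>Dtilde. \<not> (\<exists>C. \<forall>P. hnorm (basis_coeffs q (Eop p d' P)) \<le> C * hnorm (basis_coeffs q P)))"
proof -
  have B: "triangular_basis q" by (simp add: q_def triangular_basis_laguerre)
  note formal_adjoint = hinner_Eop_laguerre[of \<alpha> d, folded q_def T_def]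
  have adj_coeffs_eq: "adj_coeffs d g = (\<lambda>k. g k * cnj (d k) + (\<Sum>t<k. (cnj (d t) - cnj (d (Suc t))) * g t))"
    for g by (simp add: adj_coeffs_def fun_eq_iff)
  have dom: "adj_dom q T g \<longleftrightarrow> l2seq g \<and> l2seq (adj_coeffs d g)" for g
    by (rule adj_dom_iff_formal_adjoint[OF B formal_adjoint])
  show ?thesis
  proof (intro conjI allI impI ballI)
    show "adj_dom q T g \<longleftrightarrow> summable (\<lambda>k. (cmod (g k * cnj (d k) + (\<Sum>t<k. (cnj (d t) - cnj (d (Suc t))) * g t)))^2)"
      if "l2seq g" for g using that by (simp add: dom l2seq_def adj_coeffs_def)
    show "adj q T g = (\<lambda>k. g k * cnj (d k) + (\<Sum>t<k. (cnj (d t) - cnj (d (Suc t))) * g t))"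
      if "adj_dom q T g" for g using adj_eq_formal_adjoint[OF B formal_adjoint that] adj_coeffs_eq by simp
    show "adj_dom q T (basis_coeffs q (q j)) \<longleftrightarrow> cnj (d j) - cnj (d (Suc j)) = 0" for j
      unfolding dom basis_coeffs_basis[OF B] using l2seq_delta l2seq_adj_coeffs_delta_iff by blast
    show "\<not> (\<exists>C. \<forall>P. hnorm (basis_coeffs q (Eop p d' P)) \<le> C * hnorm (basis_coeffs q P))"
      if "d' \<in> Dtilde" for d' using Eop_laguerre_unbounded[OF that] by (simp add: p_def q_def)
  qed
qed

end
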